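(* Let $\mathfrak{g}$ be a finite-dimensional real pre-Lie algebra and let $\phi\in\Omega^1(\mathfrak{g};\mathfrak{g})$ be the solution of the equations $(\mathrm{MC}_\phi)_x(x,y)=0$ and $\phi_x(x)=x$ for all $x,y\in\mathfrak{g}$ (namely $\phi_x(y)=\int_0^1 e^{-t\,\mathrm{ad}_x}y\,dt$). Then $\mathrm{MC}_\phi=0$ if and only if $\mathrm{Jac}=0$. More precisely, for all $x,y,z\in\mathfrak{g}$, \[ \mathrm{Jac}(x,y,z)=-3\,\frac{d}{dt}(\mathrm{MC}_\phi)_{tx}(y,z)\Big|_{t=0}, \] \[ (\mathrm{MC}_\phi)_x(y,z)=-\int_0^1 e^{(t-1)\mathrm{ad}_x}\,\mathrm{Jac}\big(x,\phi_{tx}(ty),\phi_{tx}(tz)\big)\,dt . \]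
   Context: A pre-Lie algebra is a vector space $\mathfrak{g}$ with an antisymmetric bilinear map $[\cdot,\cdot]$; $\mathrm{ad}_x(y)=[x,y]$; its Jacobiator is $\mathrm{Jac}(x,y,z)=[[x,y],z]+[[y,z],x]+[[z,x],y]$. Tangent spaces of $\mathfrak{g}$ are identified with $\mathfrak{g}$. On $\mathfrak{g}$-valued forms $\Omega^*(\mathfrak{g};\mathfrak{g})$ one has the de Rham differential $d$ and the bracket $[\omega,\eta](X_1,\dots,X_{p+q})=\sum_{\sigma\in S_{p,q}}\mathrm{sgn}(\sigma)[\omega(X_{\sigma(1)},\dots),\eta(X_{\sigma(p+1)},\dots)]$ ($S_{p,q}$ the $(p,q)$-shuffles). The Maurer–Cartan 2-form of $\phi\in\Omega^1(\mathfrak{g};\mathfrak{g})$ is $\mathrm{MC}_\phi=d\phi+\tfrac12[\phi,\phi]$. *)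

theory Defs
  imports "HOL-Analysis.Analysis"
begin

definition op_exp :: "('a::euclidean_space \<Rightarrow> 'a) \<Rightarrow> 'a \<Rightarrow> 'a" where
  "op_exp A y = (\<Sum>k. (1 / fact k) *\<^sub>R (A ^^ k) y)"

definition ad :: "('a \<Rightarrow> 'a \<Rightarrow> 'a) \<Rightarrow> 'a \<Rightarrow> 'a \<Rightarrow> 'a" where
  "ad br x = (\<lambda>y. br x y)"

definition Jac :: "('a::real_vector \<Rightarrow> 'a \<Rightarrow> 'a) \<Rightarrow> 'a \<Rightarrow> 'a \<Rightarrow> 'a \<Rightarrow> 'a" where
  "Jac br x y z = br (br x y) z + br (br y z) x + br (br z x) y"

definition phi :: "('a::euclidean_space \<Rightarrow> 'a \<Rightarrow> 'a) \<Rightarrow> 'a \<Rightarrow> 'a \<Rightarrow> 'a" where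
  "phi br x y = integral {0..1} (\<lambda>t::real. op_exp (\<lambda>v. - (t *\<^sub>R ad br x v)) y)"

text \<open>de Rham differential of a g-valued 1-form omega on g (constant vector fields):
  (d omega)_x(y,z) = D_y(omega(z))(x) - D_z(omega(y))(x).\<close>
definition dR1 :: "('a::euclidean_space \<Rightarrow> 'a \<Rightarrow> 'a) \<Rightarrow> 'a \<Rightarrow> 'a \<Rightarrow> 'a \<Rightarrow> 'a" where
  "dR1 \<omega> x y z = frechet_derivative (\<lambda>x'. \<omega> x' z) (at x) y
                 - frechet_derivative (\<lambda>x'. \<omega> x' y) (at x) z"

text \<open>Bracket of two g-valued 1-forms: sum over (1,1)-shuffles.\<close>
definition brk11 :: "('a \<Rightarrow> 'a \<Rightarrow> 'a) \<Rightarrow> ('a \<Rightarrow> 'a \<Rightarrow> 'a) \<Rightarrow> ('a \<Rightarrow> 'a \<Rightarrow> 'a)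
    \<Rightarrow> 'a \<Rightarrow> 'a \<Rightarrow> 'a \<Rightarrow> 'a::real_vector" where
  "brk11 br \<omega> \<eta> x y z = br (\<omega> x y) (\<eta> x z) - br (\<omega> x z) (\<eta> x y)"

definition MC :: "('a::euclidean_space \<Rightarrow> 'a \<Rightarrow> 'a) \<Rightarrow> ('a \<Rightarrow> 'a \<Rightarrow> 'a) \<Rightarrow> 'a \<Rightarrow> 'a \<Rightarrow> 'a \<Rightarrow> 'a" where
  "MC br \<omega> x y z = dR1 \<omega> x y z + (1/2) *\<^sub>R brk11 br \<omega> \<omega> x y z"

end

theory Submission
  imports Defs
begin

text \<open>
  Everything is governed by the linear ODE u' = g - ad_x u, u(0) = 0 on [0,1], whose unique
  solution is u(s) = exp(-s ad_x) \<integral>_0^s exp(r ad_x) g(r) dr (variation of constants).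
  The path W(s) = \<phi>_(sx)(sy) solves it for g = y, and \<phi>_x(y) = W(1). Perturbing x, Duhamel's
  principle shows that the derivative of \<phi> in the direction h is the solution for g = -[h, W].
  Inserting this into MC_\<phi> gives a path solving the ODE for g = -Jac(x, \<phi>_(sx)(sy), \<phi>_(sx)(sz)),
  which is the integral formula. Replacing x by tx turns that formula into
  (MC_\<phi>)_(tx)(y,z) = t F(t) with F continuous and F(0) = -Jac(x,y,z) \<integral>_0^1 s^2 ds, whence the
  derivative formula; the equivalence follows from the two formulas.
\<close>

section \<open>The Banach algebra of endomorphisms\<close>

typedef (overloaded) 'a endo = "UNIV :: ('a::euclidean_space \<Rightarrow>\<^sub>L 'a) set"
  morphisms endo_blinfun Endo by simp

setup_lifting type_definition_endo

lemma id_blinfun_neq_zero: "id_blinfun \<noteq> (0 :: 'a::euclidean_space \<Rightarrow>\<^sub>L 'a)"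
  by (metis norm_blinfun_id norm_zero zero_neq_one)

instantiation endo :: (euclidean_space) real_normed_algebra_1
begin

lift_definition zero_endo :: "'a endo" is 0 .
lift_definition one_endo :: "'a endo" is id_blinfun .
lift_definition plus_endo :: "'a endo \<Rightarrow> 'a endo \<Rightarrow> 'a endo" is "(+)" .
lift_definition minus_endo :: "'a endo \<Rightarrow> 'a endo \<Rightarrow> 'a endo" is "(-)" .
lift_definition uminus_endo :: "'a endo \<Rightarrow> 'a endo" is uminus .
lift_definition times_endo :: "'a endo \<Rightarrow> 'a endo \<Rightarrow> 'a endo" is "(o\<^sub>L)" .
lift_definition scaleR_endo :: "real \<Rightarrow> 'a endo \<Rightarrow> 'a endo" is scaleR .
lift_definition norm_endo :: "'a endo \<Rightarrow> real" is norm .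

definition dist_endo :: "'a endo \<Rightarrow> 'a endo \<Rightarrow> real" where
  "dist_endo a b = norm (a - b)"
definition sgn_endo :: "'a endo \<Rightarrow> 'a endo" where
  "sgn_endo a = inverse (norm a) *\<^sub>R a"
definition uniformity_endo :: "('a endo \<times> 'a endo) filter" where
  "uniformity_endo = (INF e\<in>{0<..}. principal {(a, b). dist a b < e})"
definition open_endo :: "'a endo set \<Rightarrow> bool" where
  "open_endo S = (\<forall>a\<in>S. \<forall>\<^sub>F (a', b) in uniformity. a' = a \<longrightarrow> b \<in> S)"

lemmas endo_rep_eqs = zero_endo.rep_eq one_endo.rep_eq plus_endo.rep_eq minus_endo.rep_eq
  uminus_endo.rep_eq times_endo.rep_eq scaleR_endo.rep_eq norm_endo.rep_eq

instance
  by intro_classes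
    (auto simp: dist_endo_def open_endo_def sgn_endo_def uniformity_endo_def
      endo_blinfun_inject[symmetric] endo_rep_eqs algebra_simps norm_triangle_ineq
      id_blinfun_neq_zero norm_blinfun_compose blinfun.bilinear_simps intro!: blinfun_eqI)

end

lemma dist_endo_blinfun: "dist a b = dist (endo_blinfun a) (endo_blinfun b)"
  by (simp add: dist_endo_def dist_norm endo_rep_eqs)

instance endo :: (euclidean_space) banach
proof
  fix X :: "nat \<Rightarrow> 'a endo"
  assume "Cauchy X"
  then have "Cauchy (\<lambda>n. endo_blinfun (X n))"
    by (simp add: Cauchy_def dist_endo_blinfun)
  then obtain L where "(\<lambda>n. endo_blinfun (X n)) \<longlonglongrightarrow> L"
    using convergent_eq_Cauchy by blast
  then have "X \<longlonglongrightarrow> Endo L"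
    by (simp add: lim_sequentially dist_endo_blinfun Endo_inverse)
  then show "convergent X"
    by (auto simp: convergent_def)
qed

definition endo_apply :: "'a::euclidean_space endo \<Rightarrow> 'a \<Rightarrow> 'a" where
  "endo_apply A v = blinfun_apply (endo_blinfun A) v"

lemma norm_endo_apply: "norm (endo_apply A v) \<le> norm A * norm v"
  by (simp add: endo_apply_def norm_endo.rep_eq norm_blinfun)

lemma bounded_bilinear_endo_apply: "bounded_bilinear endo_apply"
proof
  show "\<exists>K. \<forall>a b. norm (endo_apply a b) \<le> norm a * norm b * K"
    by (rule exI[of _ 1]) (simp add: norm_endo_apply)
qed (simp_all add: endo_apply_def endo_rep_eqs blinfun.bilinear_simps)

interpretation endo_apply: bounded_bilinear endo_apply
  by (rule bounded_bilinear_endo_apply)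

lemma endo_eqI: "(\<And>v. endo_apply A v = endo_apply B v) \<Longrightarrow> A = B"
  unfolding endo_apply_def by (metis blinfun_eqI endo_blinfun_inject)

lemma endo_apply_times [simp]: "endo_apply (A * B) v = endo_apply A (endo_apply B v)"
  by (simp add: endo_apply_def times_endo.rep_eq)

lemma endo_apply_one [simp]: "endo_apply 1 v = v"
  by (simp add: endo_apply_def one_endo.rep_eq)

lemma endo_apply_power: "endo_apply (A ^ k) v = (endo_apply A ^^ k) v"
  by (induction k) auto

lemma endo_apply_exp: "endo_apply (exp A) v = (\<Sum>k. (1 / fact k) *\<^sub>R (endo_apply A ^^ k) v)"
proof -
  have "endo_apply (exp A) v = (\<Sum>k. endo_apply (A ^ k /\<^sub>R fact k) v)"
    unfolding exp_def
    by (rule bounded_linear.suminf[OF endo_apply.bounded_linear_left summable_exp_generic])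
  then show ?thesis
    by (simp add: endo_apply.scaleR_left endo_apply_power divide_inverse_commute)
qed

section \<open>Variation of constants\<close>

lemma endo_apply_exp_exp:
  "endo_apply (exp (a *\<^sub>R L)) (endo_apply (exp (b *\<^sub>R L)) w) = endo_apply (exp ((a + b) *\<^sub>R L)) w"
  by (simp add: endo_apply_times[symmetric] exp_add_commuting[symmetric] scaleR_left_distrib
      del: endo_apply_times)

lemma endo_apply_exp_neg_exp [simp]:
  "endo_apply (exp (- (s *\<^sub>R L))) (endo_apply (exp (s *\<^sub>R L)) w) = w"
  using endo_apply_exp_exp[of "- s" L s] by simp

lemma endo_apply_exp_commute:
  "endo_apply (exp (t *\<^sub>R L)) (endo_apply L w) = endo_apply L (endo_apply (exp (t *\<^sub>R L)) w)"
  by (simp add: endo_apply_times[symmetric] exp_times_scaleR_commute del: endo_apply_times)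

lemma has_vector_derivative_endo_apply_exp:
  assumes "(v has_vector_derivative v') (at t within T)"
  shows "((\<lambda>t. endo_apply (exp (t *\<^sub>R L)) (v t)) has_vector_derivative
            endo_apply (exp (t *\<^sub>R L)) (endo_apply L (v t) + v')) (at t within T)"
  using endo_apply.has_vector_derivative[OF exp_scaleR_has_vector_derivative_right assms, of L]
  by (simp add: endo_apply.add_right add.commute)

lemma continuous_on_exp_scaleR:
  "continuous_on S (\<lambda>t. exp (c t *\<^sub>R (L::'a::euclidean_space endo)))" if "continuous_on S c"
proof -
  have "continuous_on UNIV (\<lambda>t. exp (t *\<^sub>R L))"
    by (intro continuous_at_imp_continuous_on ballI
        has_vector_derivative_continuous[OF exp_scaleR_has_vector_derivative_right])
  from continuous_on_compose2[OF this that] show ?thesis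
    by simp
qed

lemma continuous_on_endo_apply_exp:
  "continuous_on S c \<Longrightarrow> continuous_on S g \<Longrightarrow>
    continuous_on S (\<lambda>t. endo_apply (exp (c t *\<^sub>R L)) (g t))"
  by (intro endo_apply.continuous_on continuous_on_exp_scaleR)

lemma norm_endo_apply_exp_le:
  assumes "\<bar>t\<bar> \<le> 1"
  shows "norm (endo_apply (exp (t *\<^sub>R L)) w) \<le> exp (norm L) * norm w"
proof -
  have "norm (endo_apply (exp (t *\<^sub>R L)) w) \<le> exp (norm (t *\<^sub>R L)) * norm w"
    by (intro order_trans[OF norm_endo_apply] mult_right_mono norm_exp) auto
  also have "\<dots> \<le> exp (norm L) * norm w"
    using assms by (intro mult_right_mono) (auto simp: mult_left_le_one_le)
  finally show ?thesis .
qed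

definition duhamel :: "'a::euclidean_space endo \<Rightarrow> (real \<Rightarrow> 'a) \<Rightarrow> real \<Rightarrow> 'a" where
  "duhamel L g s = endo_apply (exp ((- s) *\<^sub>R L)) (integral {0..s} (\<lambda>r. endo_apply (exp (r *\<^sub>R L)) (g r)))"

lemma duhamel_0 [simp]: "duhamel L g 0 = 0"
  by (simp add: duhamel_def endo_apply.zero_right)

lemma duhamel_has_vector_derivative:
  assumes g: "continuous_on {0..1} g" and s: "s \<in> {0..1}"
  shows "(duhamel L g has_vector_derivative (g s - endo_apply L (duhamel L g s))) (at s within {0..1})"
proof -
  let ?F = "\<lambda>r. endo_apply (exp (r *\<^sub>R L)) (g r)"
  have "((\<lambda>u. integral {0..u} ?F) has_vector_derivative ?F s) (at s within {0..1})"
    by (rule integral_has_vector_derivative[OF continuous_on_endo_apply_exp[OF continuous_on_id g] s])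
  from has_vector_derivative_endo_apply_exp[OF this, of "- L"]
  have "(duhamel L g has_vector_derivative
      endo_apply (exp (s *\<^sub>R (- L))) (endo_apply (- L) (integral {0..s} ?F) + ?F s)) (at s within {0..1})"
    by (simp add: duhamel_def[abs_def])
  moreover have "endo_apply (exp (s *\<^sub>R (- L))) (endo_apply (- L) (integral {0..s} ?F) + ?F s)
      = g s - endo_apply L (duhamel L g s)"
    using endo_apply_exp_commute[of s "- L"]
    by (simp add: duhamel_def endo_apply.add_right endo_apply.diff_right endo_apply.minus_left
        endo_apply.minus_right)
  ultimately show ?thesis
    by simp
qed

lemma continuous_on_duhamel: "continuous_on {0..1} g \<Longrightarrow> continuous_on {0..1} (duhamel L g)"
  using duhamel_has_vector_derivative has_vector_derivative_continuous
    continuous_on_eq_continuous_within by blast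

lemma has_vector_derivative_zero_imp_const:
  fixes Y :: "real \<Rightarrow> 'a::real_normed_vector"
  assumes "\<And>s. s \<in> {a..b} \<Longrightarrow> (Y has_vector_derivative 0) (at s within {a..b})"
    and "s \<in> {a..b}"
  shows "Y s = Y a"
proof -
  obtain c where "\<forall>u\<in>{a..b}. Y u = c"
    using has_derivative_zero_constant[of "{a..b}" Y] assms(1)
    by (auto simp: has_vector_derivative_def)
  then show ?thesis
    using assms(2) by auto
qed

text \<open>Uniqueness: exp(sL) (u(s) - duhamel L g s) has derivative zero.\<close>

lemma duhamel_unique:
  assumes g: "continuous_on {0..1} g" and D0: "D 0 = 0"
    and D: "\<And>s. s \<in> {0..1} \<Longrightarrow>
      (D has_vector_derivative (g s - endo_apply L (D s))) (at s within {0..1})"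
    and s: "s \<in> {0..1}"
  shows "D s = duhamel L g s"
proof -
  define Z where "Z s = D s - duhamel L g s" for s
  define Y where "Y s = endo_apply (exp (s *\<^sub>R L)) (Z s)" for s
  have "(Y has_vector_derivative 0) (at s within {0..1})" if "s \<in> {0..1}" for s
  proof -
    have "(Z has_vector_derivative (- endo_apply L (Z s))) (at s within {0..1})"
      unfolding Z_def
      using has_vector_derivative_diff[OF D[OF that] duhamel_has_vector_derivative[OF g that]]
      by (simp add: endo_apply.diff_right algebra_simps)
    from has_vector_derivative_endo_apply_exp[OF this, of L] show ?thesis
      unfolding Y_def by (simp add: endo_apply.zero_right)
  qed
  then have "Y s = Y 0"
    using s by (rule has_vector_derivative_zero_imp_const)
  then have "Z s = 0"
    using endo_apply_exp_neg_exp[of s L "Z s"]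
    by (simp add: Y_def Z_def D0 endo_apply.zero_right)
  then show ?thesis
    by (simp add: Z_def)
qed

lemma norm_duhamel_le:
  assumes g: "continuous_on {0..1} g" and s: "s \<in> {0..1}"
    and B: "\<And>r. r \<in> {0..1} \<Longrightarrow> norm (g r) \<le> B"
  shows "norm (duhamel L g s) \<le> exp (norm L) * (exp (norm L) * B)"
proof -
  let ?F = "\<lambda>r. endo_apply (exp (r *\<^sub>R L)) (g r)"
  have B0: "0 \<le> B"
    using order_trans[OF norm_ge_zero B[of 0]] by simp
  have int: "(?F has_integral integral {0..s} ?F) {0..s}"
    using s by (auto intro!: integrable_continuous_interval continuous_on_endo_apply_exp continuous_on_id
        continuous_on_subset[OF g])
  have bound: "norm (?F r) \<le> exp (norm L) * B" if "r \<in> {0..s}" for r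
    using that s by (intro order_trans[OF norm_endo_apply_exp_le] mult_left_mono B) auto
  have "norm (integral {0..s} ?F) \<le> exp (norm L) * B * s"
    using has_integral_bound_real[OF _ finite.emptyI int, of "exp (norm L) * B"] bound s B0 by simp
  also have "\<dots> \<le> exp (norm L) * B"
    using s B0 by (simp add: mult_left_le)
  finally show ?thesis
    unfolding duhamel_def using s by (intro order_trans[OF norm_endo_apply_exp_le] mult_left_mono) auto
qed

lemma duhamel_add:
  assumes "continuous_on {0..1} g1" "continuous_on {0..1} g2" "s \<in> {0..1}"
  shows "duhamel L (\<lambda>r. g1 r + g2 r) s = duhamel L g1 s + duhamel L g2 s"
proof -
  have "continuous_on {0..s} g1" "continuous_on {0..s} g2"
    using assms by (auto intro: continuous_on_subset)
  then show ?thesis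
    unfolding duhamel_def endo_apply.add_right
    by (subst integral_add) (auto simp: endo_apply.add_right
        intro!: integrable_continuous_interval continuous_on_endo_apply_exp continuous_on_id)
qed

lemma duhamel_diff:
  assumes "continuous_on {0..1} g1" "continuous_on {0..1} g2" "s \<in> {0..1}"
  shows "duhamel L (\<lambda>r. g1 r - g2 r) s = duhamel L g1 s - duhamel L g2 s"
proof -
  have "continuous_on {0..s} g1" "continuous_on {0..s} g2"
    using assms by (auto intro: continuous_on_subset)
  then show ?thesis
    unfolding duhamel_def endo_apply.diff_right
    by (subst integral_diff) (auto simp: endo_apply.diff_right
        intro!: integrable_continuous_interval continuous_on_endo_apply_exp continuous_on_id)
qed

lemma duhamel_scaleR: "duhamel L (\<lambda>r. c *\<^sub>R g r) s = c *\<^sub>R duhamel L g s"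
  by (simp add: duhamel_def endo_apply.scaleR_right)

lemma integral_exp_neg_eq_duhamel:
  assumes s: "s \<in> {0..1}"
  shows "integral {0..s} (\<lambda>t. endo_apply (exp ((- t) *\<^sub>R L)) z) = duhamel L (\<lambda>_. z) s"
proof (rule duhamel_unique[OF _ _ _ s])
  let ?G = "\<lambda>t. endo_apply (exp ((- t) *\<^sub>R L)) z"
  have G: "continuous_on {0..1} ?G"
    by (intro continuous_on_endo_apply_exp continuous_intros)
  define Q where "Q u = ?G u + endo_apply L (integral {0..u} ?G)" for u
  have Q': "(Q has_vector_derivative 0) (at u within {0..1})" if u: "u \<in> {0..1}" for u
  proof -
    have "((\<lambda>t. endo_apply (exp (t *\<^sub>R (- L))) z) has_vector_derivative
        endo_apply (exp (u *\<^sub>R (- L))) (endo_apply (- L) z + 0)) (at u within {0..1})"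
      by (rule has_vector_derivative_endo_apply_exp) simp
    moreover have "((\<lambda>t. endo_apply L (integral {0..t} ?G)) has_vector_derivative
        endo_apply L (?G u)) (at u within {0..1})"
      by (rule bounded_linear.has_vector_derivative[OF endo_apply.bounded_linear_right
            integral_has_vector_derivative[OF G u]])
    ultimately show ?thesis
      unfolding Q_def using endo_apply_exp_commute[of u "- L" z]
      by (auto dest: has_vector_derivative_add simp: endo_apply.minus_left endo_apply.minus_right)
  qed
  fix s :: real
  assume s: "s \<in> {0..1}"
  from has_vector_derivative_zero_imp_const[OF Q' s]
  have "?G s = z - endo_apply L (integral {0..s} ?G)"
    by (simp add: Q_def endo_apply.zero_right algebra_simps)
  with integral_has_vector_derivative[OF G s]
  show "((\<lambda>u. integral {0..u} ?G) has_vector_derivative z - endo_apply L (integral {0..s} ?G))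
      (at s within {0..1})"
    by simp
qed simp_all

lemma has_derivative_at_quadratic_remainder:
  assumes "bounded_linear f'" and d: "d > 0" and C: "C > 0"
    and rem: "\<And>x. norm (x - x0) < d \<Longrightarrow> norm (f x - f x0 - f' (x - x0)) \<le> C * norm (x - x0) ^ 2"
  shows "(f has_derivative f') (at x0)"
  unfolding has_derivative_at_alt
proof (intro conjI allI impI assms(1))
  fix e :: real
  assume e: "e > 0"
  show "\<exists>d'>0. \<forall>x. norm (x - x0) < d' \<longrightarrow> norm (f x - f x0 - f' (x - x0)) \<le> e * norm (x - x0)"
  proof (intro exI[of _ "min d (e / C)"] conjI allI impI)
    show "0 < min d (e / C)"
      using d e C by simp
    fix x
    assume x: "norm (x - x0) < min d (e / C)"
    then have "C * norm (x - x0) \<le> e"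
      using C by (simp add: field_simps)
    then have "C * norm (x - x0) ^ 2 \<le> e * norm (x - x0)"
      by (simp add: power2_eq_square mult_right_mono mult.assoc[symmetric])
    then show "norm (f x - f x0 - f' (x - x0)) \<le> e * norm (x - x0)"
      using rem[of x] x by simp
  qed
qed

lemma has_vector_derivative_scaleR_at_0:
  fixes F :: "real \<Rightarrow> 'a::real_normed_vector"
  assumes "isCont F 0"
  shows "((\<lambda>t. t *\<^sub>R F t) has_vector_derivative F 0) (at 0)"
  unfolding has_vector_derivative_def has_derivative_at_alt
proof (intro conjI allI impI bounded_linear_scaleR_left)
  fix e :: real
  assume "e > 0"
  with assms obtain d where d: "d > 0" and dF: "\<And>t. dist t 0 < d \<Longrightarrow> dist (F t) (F 0) < e"
    unfolding continuous_at_eps_delta by blast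
  show "\<exists>d>0. \<forall>t. norm (t - 0) < d \<longrightarrow>
      norm (t *\<^sub>R F t - 0 *\<^sub>R F 0 - (t - 0) *\<^sub>R F 0) \<le> e * norm (t - 0)"
  proof (intro exI[of _ d] conjI allI impI d)
    fix t :: real
    assume t: "norm (t - 0) < d"
    have "norm (t *\<^sub>R F t - 0 *\<^sub>R F 0 - (t - 0) *\<^sub>R F 0) = \<bar>t\<bar> * norm (F t - F 0)"
      by (simp add: scaleR_diff_right[symmetric])
    also have "\<dots> \<le> \<bar>t\<bar> * e"
      using dF[of t] t by (intro mult_left_mono) (auto simp: dist_norm)
    finally show "norm (t *\<^sub>R F t - 0 *\<^sub>R F 0 - (t - 0) *\<^sub>R F 0) \<le> e * norm (t - 0)"
      by (simp add: mult.commute)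
  qed
qed

section \<open>The 1-form \<open>\<phi>\<close> of a pre-Lie algebra\<close>

locale pre_lie =
  fixes br :: "'a::euclidean_space \<Rightarrow> 'a \<Rightarrow> 'a"
  assumes bilinear: "bilinear br"
    and antisym: "\<And>x y. br x y = - br y x"
begin

sublocale br: bounded_bilinear br
  using bilinear bilinear_conv_bounded_bilinear by blast

definition ad_endo :: "'a \<Rightarrow> 'a endo" where
  "ad_endo x = Endo (Blinfun (br x))"

lemma endo_apply_ad_endo [simp]: "endo_apply (ad_endo x) v = br x v"
  unfolding ad_endo_def endo_apply_def
  by (simp add: Endo_inverse bounded_linear_Blinfun_apply br.bounded_linear_right)

lemma ad_endo_scaleR: "ad_endo (c *\<^sub>R x) = c *\<^sub>R ad_endo x"
  by (rule endo_eqI) (simp add: endo_apply.scaleR_left br.scaleR_left)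

lemma ad_endo_zero [simp]: "ad_endo 0 = 0"
  by (rule endo_eqI) (simp add: br.zero_left endo_apply.zero_left)

lemma norm_ad_endo_le:
  assumes "\<And>a b. norm (br a b) \<le> norm a * norm b * K" and "0 \<le> K"
  shows "norm (ad_endo x) \<le> K * norm x"
proof -
  have "norm (endo_blinfun (ad_endo x)) \<le> K * norm x"
  proof (rule norm_blinfun_bound)
    show "0 \<le> K * norm x"
      using assms(2) by simp
    show "norm (blinfun_apply (endo_blinfun (ad_endo x)) v) \<le> K * norm x * norm v" for v
      using assms(1)[of x v] by (metis endo_apply_ad_endo endo_apply_def mult.commute mult.left_commute)
  qed
  then show ?thesis
    by (simp add: norm_endo.rep_eq)
qed

lemma op_exp_ad_eq: "op_exp (\<lambda>v. c *\<^sub>R ad br x v) y = endo_apply (exp (c *\<^sub>R ad_endo x)) y"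
proof -
  have "(\<lambda>v. c *\<^sub>R ad br x v) = endo_apply (c *\<^sub>R ad_endo x)"
    by (auto simp: ad_def endo_apply.scaleR_left)
  then show ?thesis
    by (simp add: op_exp_def endo_apply_exp)
qed

lemma phi_eq_integral: "phi br x z = integral {0..1} (\<lambda>r. endo_apply (exp ((- r) *\<^sub>R ad_endo x)) z)"
  using op_exp_ad_eq[of "- _" x z] by (simp add: phi_def)

text \<open>phi_path x z s = \<phi>_(sx)(sz), see phi_scaleR_scaleR.\<close>

definition phi_path :: "'a \<Rightarrow> 'a \<Rightarrow> real \<Rightarrow> 'a" where
  "phi_path x z = duhamel (ad_endo x) (\<lambda>_. z)"

lemma phi_path_0 [simp]: "phi_path x z 0 = 0"
  by (simp add: phi_path_def)

lemma phi_path_has_vector_derivative: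
  "s \<in> {0..1} \<Longrightarrow> (phi_path x z has_vector_derivative (z - br x (phi_path x z s))) (at s within {0..1})"
  unfolding phi_path_def using duhamel_has_vector_derivative[of "\<lambda>_. z" s "ad_endo x"] by simp

lemma continuous_on_phi_path: "continuous_on {0..1} (phi_path x z)"
  unfolding phi_path_def by (rule continuous_on_duhamel) simp

lemma norm_phi_path_le:
  "s \<in> {0..1} \<Longrightarrow> norm (phi_path x z s) \<le> exp (norm (ad_endo x)) * (exp (norm (ad_endo x)) * norm z)"
  unfolding phi_path_def by (rule norm_duhamel_le) auto

lemma continuous_on_br_phi_path: "continuous_on {0..1} (\<lambda>r. br h (phi_path x z r))"
  by (intro br.continuous_on continuous_on_const continuous_on_phi_path)

lemma phi_eq_phi_path: "phi br x z = phi_path x z 1"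
  unfolding phi_eq_integral phi_path_def by (rule integral_exp_neg_eq_duhamel) simp

lemma phi_scaleR_scaleR:
  assumes t: "t \<in> {0..1}"
  shows "phi br (t *\<^sub>R x) (t *\<^sub>R y) = phi_path x y t"
proof (cases "t = 0")
  case True
  then show ?thesis
    by (simp add: phi_eq_phi_path phi_path_def duhamel_def endo_apply.zero_right)
next
  case False
  with t have t0: "t > 0"
    by auto
  let ?G = "\<lambda>r. endo_apply (exp ((- r) *\<^sub>R ad_endo x)) y"
  have "?G integrable_on {0..t}"
    by (intro integrable_continuous_interval continuous_on_endo_apply_exp continuous_intros)
  then have "(?G has_integral integral {0..t} ?G) (cbox 0 t)"
    by (simp add: has_integral_integral)
  from has_integral_cmul[OF has_integral_affinity'[OF this t0, of 0], of t]
  have "((\<lambda>r. t *\<^sub>R ?G (t * r)) has_integral integral {0..t} ?G) {0..1}"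
    using t0 by simp
  moreover have "phi br (t *\<^sub>R x) (t *\<^sub>R y) = integral {0..1} (\<lambda>r. t *\<^sub>R ?G (t * r))"
    by (simp add: phi_eq_integral ad_endo_scaleR endo_apply.scaleR_right mult.commute)
  moreover have "integral {0..t} ?G = phi_path x y t"
    unfolding phi_path_def using t by (intro integral_exp_neg_eq_duhamel) auto
  ultimately show ?thesis
    by (metis integral_unique)
qed

section \<open>The derivative of \<open>\<phi>\<close>\<close>

definition phi_deriv :: "'a \<Rightarrow> 'a \<Rightarrow> 'a \<Rightarrow> 'a" where
  "phi_deriv x0 z h = duhamel (ad_endo x0) (\<lambda>r. - br h (phi_path x0 z r)) 1"

lemma linear_phi_deriv: "linear (phi_deriv x0 z)"
proof (rule linearI)
  show "phi_deriv x0 z (h1 + h2) = phi_deriv x0 z h1 + phi_deriv x0 z h2" for h1 h2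
    unfolding phi_deriv_def
    by (subst duhamel_add[symmetric]) (auto intro!: continuous_intros continuous_on_br_phi_path
        simp: br.add_left)
  show "phi_deriv x0 z (c *\<^sub>R h) = c *\<^sub>R phi_deriv x0 z h" for c h
    unfolding phi_deriv_def by (subst duhamel_scaleR[symmetric]) (simp add: br.scaleR_left)
qed

lemma phi_path_diff:
  assumes s: "s \<in> {0..1}"
  shows "phi_path x z s - phi_path x0 z s = duhamel (ad_endo x0) (\<lambda>r. - br (x - x0) (phi_path x z r)) s"
proof -
  have "phi_path x z s = duhamel (ad_endo x0) (\<lambda>r. z - br (x - x0) (phi_path x z r)) s"
  proof (rule duhamel_unique[OF _ _ _ s])
    fix s :: real
    assume "s \<in> {0..1}"
    from phi_path_has_vector_derivative[OF this, of x z]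
    show "(phi_path x z has_vector_derivative
        z - br (x - x0) (phi_path x z s) - endo_apply (ad_endo x0) (phi_path x z s)) (at s within {0..1})"
      by (simp add: br.diff_left algebra_simps)
  qed (auto intro!: continuous_intros continuous_on_br_phi_path)
  moreover have "duhamel (ad_endo x0) (\<lambda>r. z - br (x - x0) (phi_path x z r)) s
      = duhamel (ad_endo x0) (\<lambda>_. z) s + duhamel (ad_endo x0) (\<lambda>r. - br (x - x0) (phi_path x z r)) s"
    using s
    by (subst duhamel_add[symmetric]) (auto intro!: continuous_intros continuous_on_br_phi_path)
  ultimately show ?thesis
    by (simp add: phi_path_def)
qed

lemma phi_remainder_eq_duhamel:
  "phi br x z - phi br x0 z - phi_deriv x0 z (x - x0)
    = duhamel (ad_endo x0) (\<lambda>r. - br (x - x0) (phi_path x z r - phi_path x0 z r)) 1"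
proof -
  have "phi br x z - phi br x0 z - phi_deriv x0 z (x - x0) = duhamel (ad_endo x0)
      (\<lambda>r. - br (x - x0) (phi_path x z r) - - br (x - x0) (phi_path x0 z r)) 1"
    unfolding phi_eq_phi_path phi_path_diff[of 1, simplified] phi_deriv_def
    by (rule duhamel_diff[symmetric]) (auto intro!: continuous_intros continuous_on_br_phi_path)
  then show ?thesis
    by (simp add: br.diff_right)
qed

lemma br_bound: "\<exists>K>0. \<forall>a b M. norm b \<le> M \<longrightarrow> norm (br a b) \<le> norm a * M * K"
proof -
  obtain K where K: "K > 0" "\<And>a b. norm (br a b) \<le> norm a * norm b * K"
    using br.pos_bounded by blast
  have "norm (br a b) \<le> norm a * M * K" if b: "norm b \<le> M" for a b M
  proof -
    have "norm a * norm b * K \<le> norm a * M * K"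
      using b K(1) by (intro mult_right_mono mult_left_mono) auto
    then show ?thesis
      using K(2)[of a b] by linarith
  qed
  with K(1) show ?thesis
    by blast
qed

lemma phi_path_lipschitz:
  "\<exists>C\<ge>0. \<forall>x r. norm (x - x0) < 1 \<longrightarrow> r \<in> {0..1} \<longrightarrow>
      norm (phi_path x z r - phi_path x0 z r) \<le> C * norm (x - x0)"
proof -
  obtain K where "K > 0" "\<forall>a b M. norm b \<le> M \<longrightarrow> norm (br a b) \<le> norm a * M * K"
    using br_bound by blast
  note K = this(1) this(2)[rule_format]
  define M where "M = exp (K * (norm x0 + 1)) * (exp (K * (norm x0 + 1)) * norm z)"
  define c where "c = exp (norm (ad_endo x0))"
  have "norm (phi_path x z r - phi_path x0 z r) \<le> c * (c * (norm (x - x0) * M * K))"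
    if x: "norm (x - x0) < 1" and r: "r \<in> {0..1}" for x r
  proof -
    have "norm x \<le> norm x0 + 1"
      using x norm_triangle_sub[of x x0] by (simp add: norm_minus_commute)
    then have "exp (norm (ad_endo x)) \<le> exp (K * (norm x0 + 1))"
      using norm_ad_endo_le[OF K(2)[OF order_refl], of x] K(1) by (simp add: order_trans mult_left_mono)
    then have "exp (norm (ad_endo x)) * (exp (norm (ad_endo x)) * norm z) \<le> M"
      unfolding M_def by (intro mult_mono) (auto intro: mult_right_mono)
    then have M: "norm (phi_path x z u) \<le> M" if "u \<in> {0..1}" for u
      using norm_phi_path_le[OF that, of x z] by linarith
    show ?thesis
      unfolding phi_path_diff[OF r] c_def
    proof (rule norm_duhamel_le[OF _ r])
      fix u :: real
      assume "u \<in> {0..1}"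
      then show "norm (- br (x - x0) (phi_path x z u)) \<le> norm (x - x0) * M * K"
        using K(2)[OF M[of u]] by simp
    qed (auto intro!: continuous_intros continuous_on_br_phi_path)
  qed
  moreover have "0 \<le> c * c * M * K"
    using K by (simp add: c_def M_def)
  ultimately show ?thesis
    by (intro exI[of _ "c * c * M * K"]) (auto simp: mult_ac)
qed

lemma phi_has_derivative: "((\<lambda>x. phi br x z) has_derivative phi_deriv x0 z) (at x0)"
proof -
  obtain K where "K > 0" "\<forall>a b M. norm b \<le> M \<longrightarrow> norm (br a b) \<le> norm a * M * K"
    using br_bound by blast
  note K = this(1) this(2)[rule_format]
  obtain C where C: "C \<ge> 0" and lip: "\<And>x r. norm (x - x0) < 1 \<Longrightarrow> r \<in> {0..1} \<Longrightarrow>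
      norm (phi_path x z r - phi_path x0 z r) \<le> C * norm (x - x0)"
    using phi_path_lipschitz by blast
  define c where "c = exp (norm (ad_endo x0))"
  show ?thesis
  proof (rule has_derivative_at_quadratic_remainder[where d = 1 and C = "c * c * C * K + 1"])
    show "bounded_linear (phi_deriv x0 z)"
      using linear_phi_deriv linear_conv_bounded_linear by blast
    show "c * c * C * K + 1 > 0"
      using C K(1) by (intro add_nonneg_pos mult_nonneg_nonneg) (auto simp: c_def)
    fix x
    assume x: "norm (x - x0) < 1"
    have "norm (phi br x z - phi br x0 z - phi_deriv x0 z (x - x0))
        \<le> c * (c * (norm (x - x0) * (C * norm (x - x0)) * K))"
      unfolding phi_remainder_eq_duhamel c_def
    proof (rule norm_duhamel_le)
      fix r :: real
      assume r: "r \<in> {0..1}"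
      show "norm (- br (x - x0) (phi_path x z r - phi_path x0 z r)) \<le> norm (x - x0) * (C * norm (x - x0)) * K"
        using K(2)[OF lip[OF x r]] by simp
    qed (auto intro!: continuous_intros br.continuous_on continuous_on_phi_path)
    also have "\<dots> \<le> (c * c * C * K + 1) * norm (x - x0) ^ 2"
      by (simp add: power2_eq_square algebra_simps)
    finally show "norm (phi br x z - phi br x0 z - phi_deriv x0 z (x - x0))
        \<le> (c * c * C * K + 1) * norm (x - x0) ^ 2" .
  qed simp
qed

lemma continuous_on_phi:
  assumes "continuous_on S f"
  shows "continuous_on S (\<lambda>p. phi br (f p) y)"
proof -
  have "continuous_on UNIV (\<lambda>x. phi br x y)"
    using phi_has_derivative has_derivative_continuous continuous_at_imp_continuous_on by blast
  from continuous_on_compose2[OF this assms] show ?thesis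
    by simp
qed

section \<open>The Maurer--Cartan form of \<open>\<phi>\<close>\<close>

lemma MC_phi_eq:
  "MC br (phi br) x y z = phi_deriv x z y - phi_deriv x y z + br (phi br x y) (phi br x z)"
proof -
  have "brk11 br (phi br) (phi br) x y z = 2 *\<^sub>R br (phi br x y) (phi br x z)"
    unfolding brk11_def using antisym[of "phi br x z" "phi br x y"] by (simp add: scaleR_2)
  then show ?thesis
    unfolding MC_def dR1_def frechet_derivative_at[OF phi_has_derivative, symmetric] by simp
qed

lemma Jac_ode_identity:
  "(- br y b - br x P) - (- br z a - br x Q) + (br a (z - br x b) + br (y - br x a) b)
    = - Jac br x a b - br x (P - Q + br a b)"
proof -
  have "br z a = - br a z" "br (br a b) x = - br x (br a b)"
    "br a (br x b) = - br (br x b) a" "br b x = - br x b"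
    by (rule antisym)+
  then show ?thesis
    unfolding Jac_def
    by (simp add: br.diff_left br.diff_right br.add_right br.minus_left algebra_simps)
qed

text \<open>
  With a = phi_path x y, b = phi_path x z and P, Q the two phi_deriv terms of MC_phi_eq run up
  to time s, Jac_ode_identity says that P - Q + [a, b] solves the ODE with right-hand side
  -Jac(x, a, b).
\<close>

lemma MC_phi_eq_duhamel:
  "MC br (phi br) x y z = duhamel (ad_endo x) (\<lambda>s. - Jac br x (phi_path x y s) (phi_path x z s)) 1"
proof -
  define a where "a = phi_path x y"
  define b where "b = phi_path x z"
  define P where "P = duhamel (ad_endo x) (\<lambda>r. - br y (b r))"
  define Q where "Q = duhamel (ad_endo x) (\<lambda>r. - br z (a r))"
  define M where "M s = P s - Q s + br (a s) (b s)" for s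
  have ca: "continuous_on {0..1} a" and cb: "continuous_on {0..1} b"
    unfolding a_def b_def by (rule continuous_on_phi_path)+
  have "M 1 = duhamel (ad_endo x) (\<lambda>s. - Jac br x (a s) (b s)) 1"
  proof (rule duhamel_unique)
    show "continuous_on {0..1} (\<lambda>s. - Jac br x (a s) (b s))"
      unfolding Jac_def by (intro continuous_intros br.continuous_on continuous_on_const ca cb)
    show "M 0 = 0"
      by (simp add: M_def P_def Q_def a_def b_def br.zero_left)
    fix s :: real
    assume s: "s \<in> {0..1}"
    have da: "(a has_vector_derivative (y - br x (a s))) (at s within {0..1})"
      and db: "(b has_vector_derivative (z - br x (b s))) (at s within {0..1})"
      unfolding a_def b_def by (rule phi_path_has_vector_derivative[OF s])+
    have "continuous_on {0..1} (\<lambda>r. - br y (b r))"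
      by (intro continuous_intros br.continuous_on continuous_on_const cb)
    from duhamel_has_vector_derivative[OF this s, of "ad_endo x"]
    have "(P has_vector_derivative (- br y (b s) - br x (P s))) (at s within {0..1})"
      by (simp add: P_def)
    moreover have "continuous_on {0..1} (\<lambda>r. - br z (a r))"
      by (intro continuous_intros br.continuous_on continuous_on_const ca)
    from duhamel_has_vector_derivative[OF this s, of "ad_endo x"]
    have "(Q has_vector_derivative (- br z (a s) - br x (Q s))) (at s within {0..1})"
      by (simp add: Q_def)
    ultimately have "(M has_vector_derivative (- br y (b s) - br x (P s)) - (- br z (a s) - br x (Q s))
        + (br (a s) (z - br x (b s)) + br (y - br x (a s)) (b s))) (at s within {0..1})"
      unfolding M_def[abs_def]
      by (intro has_vector_derivative_add has_vector_derivative_diff br.has_vector_derivative da db)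
    then show "(M has_vector_derivative - Jac br x (a s) (b s) - endo_apply (ad_endo x) (M s))
        (at s within {0..1})"
      unfolding Jac_ode_identity by (simp add: M_def)
  qed simp
  moreover have "MC br (phi br) x y z = M 1"
    unfolding MC_phi_eq M_def P_def Q_def phi_deriv_def a_def b_def phi_eq_phi_path ..
  ultimately show ?thesis
    by (simp add: a_def b_def)
qed

lemma MC_phi_eq_integral_Jac:
  "MC br (phi br) x y z
    = - integral {0..1} (\<lambda>t::real. op_exp (\<lambda>v. (t - 1) *\<^sub>R ad br x v)
             (Jac br x (phi br (t *\<^sub>R x) (t *\<^sub>R y)) (phi br (t *\<^sub>R x) (t *\<^sub>R z))))"
proof -
  let ?J = "\<lambda>s. Jac br x (phi_path x y s) (phi_path x z s)"
  let ?E = "\<lambda>r. endo_apply (exp (r *\<^sub>R ad_endo x))"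
  have "continuous_on {0..1} ?J"
    unfolding Jac_def by (intro continuous_intros br.continuous_on continuous_on_const continuous_on_phi_path)
  then have "(\<lambda>r. ?E r (- ?J r)) integrable_on {0..1}"
    by (intro integrable_continuous_interval continuous_on_endo_apply_exp continuous_intros)
  then have "MC br (phi br) x y z = integral {0..1} (\<lambda>r. ?E (- 1) (?E r (- ?J r)))"
    unfolding MC_phi_eq_duhamel duhamel_def
    by (simp add: integral_linear[OF _ endo_apply.bounded_linear_right, symmetric] o_def)
  also have "\<dots> = - integral {0..1} (\<lambda>t. ?E (t - 1) (?J t))"
  proof -
    have "endo_apply (exp (- ad_endo x)) (endo_apply (exp (r *\<^sub>R ad_endo x)) w)
        = endo_apply (exp ((r - 1) *\<^sub>R ad_endo x)) w" for r w
      using endo_apply_exp_exp[of "- 1" "ad_endo x" r] by simp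
    then show ?thesis
      by (simp add: endo_apply.minus_right integral_neg)
  qed
  also have "integral {0..1} (\<lambda>t. ?E (t - 1) (?J t)) = integral {0..1} (\<lambda>t::real. op_exp
      (\<lambda>v. (t - 1) *\<^sub>R ad br x v) (Jac br x (phi br (t *\<^sub>R x) (t *\<^sub>R y)) (phi br (t *\<^sub>R x) (t *\<^sub>R z))))"
    by (rule integral_cong) (simp add: op_exp_ad_eq phi_scaleR_scaleR)
  finally show ?thesis .
qed

section \<open>The Maurer--Cartan form along a ray\<close>

definition MC_ray_integrand :: "'a \<Rightarrow> 'a \<Rightarrow> 'a \<Rightarrow> real \<Rightarrow> real \<Rightarrow> 'a" where
  "MC_ray_integrand x y z t s = endo_apply (exp (((s - 1) * t) *\<^sub>R ad_endo x))
      (Jac br x (s *\<^sub>R phi br ((s * t) *\<^sub>R x) y) (s *\<^sub>R phi br ((s * t) *\<^sub>R x) z))"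

lemma phi_scaleR_right: "phi br x (c *\<^sub>R y) = c *\<^sub>R phi br x y"
  unfolding phi_eq_integral endo_apply.scaleR_right integral_cmul ..

lemma phi_zero_left [simp]: "phi br 0 y = y"
  by (simp add: phi_eq_integral)

lemma Jac_scaleR_left: "Jac br (t *\<^sub>R x) u v = t *\<^sub>R Jac br x u v"
  and Jac_scaleR_right: "Jac br x (s *\<^sub>R u) (s *\<^sub>R v) = (s * s) *\<^sub>R Jac br x u v"
  unfolding Jac_def by (simp_all add: br.scaleR_left br.scaleR_right scaleR_right_distrib)

lemma MC_phi_ray: "MC br (phi br) (t *\<^sub>R x) y z = t *\<^sub>R (- integral {0..1} (MC_ray_integrand x y z t))"
proof -
  have "(s - 1) *\<^sub>R ad_endo (t *\<^sub>R x) = ((s - 1) * t) *\<^sub>R ad_endo x" for s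
    by (simp add: ad_endo_scaleR)
  then show ?thesis
    unfolding MC_phi_eq_integral_Jac
    by (simp add: op_exp_ad_eq MC_ray_integrand_def[abs_def] Jac_scaleR_left phi_scaleR_right
        endo_apply.scaleR_right)
qed

lemma continuous_integral_MC_ray_integrand:
  "continuous_on UNIV (\<lambda>t. integral {0..1} (MC_ray_integrand x y z t))"
proof -
  have "continuous_on (UNIV \<times> cbox 0 1) (\<lambda>(t, s). MC_ray_integrand x y z t s)"
    unfolding MC_ray_integrand_def Jac_def split_beta
    by (intro endo_apply.continuous_on continuous_on_exp_scaleR br.continuous_on continuous_intros
        continuous_on_phi)
  from integral_continuous_on_param[OF this] show ?thesis
    by simp
qed

lemma integral_MC_ray_integrand_0:
  "integral {0..1} (MC_ray_integrand x y z 0) = (1 / 3) *\<^sub>R Jac br x y z"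
proof -
  have "((\<lambda>s::real. s * s) has_integral (1 ^ 3 / 3 - 0 ^ 3 / 3)) {0..1}"
  proof (rule fundamental_theorem_of_calculus)
    fix s :: real
    have "((\<lambda>s::real. s ^ 3 / 3) has_real_derivative s * s) (at s within {0..1})"
      by (auto intro!: derivative_eq_intros simp: power2_eq_square)
    then show "((\<lambda>s. s ^ 3 / 3) has_vector_derivative s * s) (at s within {0..1})"
      by (simp add: has_real_derivative_iff_has_vector_derivative)
  qed simp
  then have "((\<lambda>s. (s * s) *\<^sub>R Jac br x y z) has_integral (1 / 3) *\<^sub>R Jac br x y z) {0..1}"
    by (intro has_integral_scaleR_left) simp
  moreover have "MC_ray_integrand x y z 0 = (\<lambda>s. (s * s) *\<^sub>R Jac br x y z)"
    by (auto simp: MC_ray_integrand_def Jac_scaleR_right)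
  ultimately show ?thesis
    by (simp add: integral_unique)
qed

lemma Jac_eq_derivative_MC_phi:
  "Jac br x y z = (-3) *\<^sub>R vector_derivative (\<lambda>t. MC br (phi br) (t *\<^sub>R x) y z) (at 0)"
proof -
  define F where "F t = - integral {0..1} (MC_ray_integrand x y z t)" for t
  have "continuous_on UNIV F"
    unfolding F_def[abs_def] by (intro continuous_on_minus continuous_integral_MC_ray_integrand)
  then have "isCont F 0"
    by (simp add: continuous_on_eq_continuous_at)
  from has_vector_derivative_scaleR_at_0[OF this]
  have "((\<lambda>t. MC br (phi br) (t *\<^sub>R x) y z) has_vector_derivative F 0) (at 0)"
    by (simp add: MC_phi_ray F_def)
  then show ?thesis
    by (simp add: vector_derivative_at F_def integral_MC_ray_integrand_0)
qed

lemma MC_phi_eq_0_iff_Jac_eq_0: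
  "(\<forall>x y z. MC br (phi br) x y z = 0) \<longleftrightarrow> (\<forall>x y z. Jac br x y z = 0)"
proof
  assume "\<forall>x y z. MC br (phi br) x y z = 0"
  then show "\<forall>x y z. Jac br x y z = 0"
    by (simp add: Jac_eq_derivative_MC_phi vector_derivative_at[OF has_vector_derivative_const])
next
  assume "\<forall>x y z. Jac br x y z = 0"
  then show "\<forall>x y z. MC br (phi br) x y z = 0"
    by (simp add: MC_phi_eq_integral_Jac op_exp_ad_eq endo_apply.zero_right)
qed

end

theorem theorem1p2:
  fixes br :: "'a::euclidean_space \<Rightarrow> 'a \<Rightarrow> 'a"
  assumes bil: "bilinear br"
    and antisym: "\<And>x y. br x y = - br y x"
  shows "((\<forall>x y z. MC br (phi br) x y z = 0) \<longleftrightarrow> (\<forall>x y z. Jac br x y z = 0))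
    \<and> (\<forall>x y z. Jac br x y z
          = (-3) *\<^sub>R vector_derivative (\<lambda>t. MC br (phi br) (t *\<^sub>R x) y z) (at 0))
    \<and> (\<forall>x y z. MC br (phi br) x y z
          = - integral {0..1} (\<lambda>t::real. op_exp (\<lambda>v. (t - 1) *\<^sub>R ad br x v)
                 (Jac br x (phi br (t *\<^sub>R x) (t *\<^sub>R y)) (phi br (t *\<^sub>R x) (t *\<^sub>R z)))))"
proof -
  interpret pre_lie br
    using assms by unfold_locales
  show ?thesis
    using MC_phi_eq_0_iff_Jac_eq_0 Jac_eq_derivative_MC_phi MC_phi_eq_integral_Jac by blast
qed

end
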